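(* Let $(z,x)$ be a feasible solution of the cluster LP on a finite vertex set $V$, and for every $S\subseteq V$ define $y_S=\sum_{S'\supseteq S}z_{S'}$. Then for every nonempty $T\subseteq V$, the matrix $M\in\mathbb R^{V\times V}$ with entries $M_{uv}=y_{T\cup\{u,v\}}-y_{T\cup\{u\}}\,y_{T\cup\{v\}}$ (for all $u,v\in V$, including $u=v$) is positive semidefinite.
   Context: The cluster LP for a finite vertex set $V$ has a variable $z_S$ for every nonempty $S\subseteq V$ and $x_{uv}$ for every unordered pair $uv$ of distinct vertices, with constraints $\sum_{S\ni u}z_S=1$ for all $u\in V$, $\sum_{S\supseteq\{u,v\}}z_S=1-x_{uv}$ for all $uv$, and $z_S\ge0$. *)

theory Defs
  imports Complex_Main
begin

text \<open>The variables z are indexed by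
subsets of V (only nonempty ones are meaningful), the variables x by unordered
pairs of distinct vertices, represented as two-element sets {u,v}.\<close>

definition cluster_lp_feasible :: "'a set \<Rightarrow> ('a set \<Rightarrow> real) \<Rightarrow> ('a set \<Rightarrow> real) \<Rightarrow> bool" where
  "cluster_lp_feasible V z x \<longleftrightarrow>
     finite V \<and>
     (\<forall>S. S \<subseteq> V \<and> S \<noteq> {} \<longrightarrow> z S \<ge> 0) \<and>
     (\<forall>u\<in>V. (\<Sum>S\<in>{S. S \<subseteq> V \<and> S \<noteq> {} \<and> u \<in> S}. z S) = 1) \<and>
     (\<forall>u\<in>V. \<forall>v\<in>V. u \<noteq> v \<longrightarrow>
        (\<Sum>S\<in>{S. S \<subseteq> V \<and> S \<noteq> {} \<and> {u, v} \<subseteq> S}. z S) = 1 - x {u, v})"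

definition yvar :: "'a set \<Rightarrow> ('a set \<Rightarrow> real) \<Rightarrow> 'a set \<Rightarrow> real" where
  "yvar V z S = (\<Sum>S'\<in>{S'. S' \<subseteq> V \<and> S' \<noteq> {} \<and> S \<subseteq> S'}. z S')"

definition psd_on :: "'a set \<Rightarrow> ('a \<Rightarrow> 'a \<Rightarrow> real) \<Rightarrow> bool" where
  "psd_on V M \<longleftrightarrow> (\<forall>u\<in>V. \<forall>v\<in>V. M u v = M v u) \<and>
     (\<forall>c :: 'a \<Rightarrow> real. (\<Sum>u\<in>V. \<Sum>v\<in>V. c u * M u v * c v) \<ge> 0)"

end

theory Submission
  imports Defs
begin

text \<open>On the clusters S containing T the values z form a sub-probability distribution: every
such S contains a fixed vertex t of T, and the clusters through t have total weight 1.
The entry M u v is then the covariance of the indicators of u and of v in S, so the quadratic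
form of M at c is the variance of the sum of c u over u in S, which is nonnegative by Jensen's
inequality for sub-probability weights.\<close>

lemma weighted_sum_square_le:
  fixes F :: "'b set" and w g :: "'b \<Rightarrow> real"
  assumes "finite F" "\<And>S. S \<in> F \<Longrightarrow> w S \<ge> 0" "sum w F \<le> 1"
  shows "(\<Sum>S\<in>F. w S * g S)\<^sup>2 \<le> (\<Sum>S\<in>F. w S * (g S)\<^sup>2)"
proof -
  define m where "m = (\<Sum>S\<in>F. w S * g S)"
  have "0 \<le> (\<Sum>S\<in>F. w S * (g S - m)\<^sup>2)"
    using assms by (intro sum_nonneg) auto
  also have "\<dots> = (\<Sum>S\<in>F. w S * (g S)\<^sup>2) - 2 * m * (\<Sum>S\<in>F. w S * g S) + m\<^sup>2 * sum w F"
    by (simp add: power2_eq_square algebra_simps sum.distrib sum_subtractf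
        sum_distrib_left sum_distrib_right)
  finally have "0 \<le> (\<Sum>S\<in>F. w S * (g S)\<^sup>2) - 2 * m\<^sup>2 + m\<^sup>2 * sum w F"
    by (simp add: m_def power2_eq_square)
  moreover have "m\<^sup>2 * sum w F \<le> m\<^sup>2"
    using assms(3) by (simp add: mult_left_le)
  ultimately show ?thesis
    unfolding m_def[symmetric] by linarith
qed

lemma quadratic_form_outer_product:
  fixes a c :: "'a \<Rightarrow> real"
  shows "(\<Sum>u\<in>V. \<Sum>v\<in>V. c u * (a u * a v) * c v) = (\<Sum>u\<in>V. c u * a u)\<^sup>2"
  unfolding power2_eq_square sum_product by (intro sum.cong refl) (simp only: mult_ac)

lemma quadratic_form_weighted_outer_products:
  fixes w :: "'b \<Rightarrow> real" and f :: "'b \<Rightarrow> 'a \<Rightarrow> real" and c :: "'a \<Rightarrow> real"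
  shows "(\<Sum>u\<in>V. \<Sum>v\<in>V. c u * (\<Sum>S\<in>F. w S * f S u * f S v) * c v)
       = (\<Sum>S\<in>F. w S * (\<Sum>u\<in>V. c u * f S u)\<^sup>2)"
proof -
  have "(\<Sum>u\<in>V. \<Sum>v\<in>V. c u * (\<Sum>S\<in>F. w S * f S u * f S v) * c v)
      = (\<Sum>u\<in>V. \<Sum>v\<in>V. \<Sum>S\<in>F. w S * (c u * f S u) * (c v * f S v))"
    by (intro sum.cong refl) (simp add: sum_distrib_left sum_distrib_right mult_ac)
  also have "\<dots> = (\<Sum>S\<in>F. \<Sum>u\<in>V. \<Sum>v\<in>V. w S * (c u * f S u) * (c v * f S v))"
    by (simp only: sum.swap[where B = F])
  also have "\<dots> = (\<Sum>S\<in>F. w S * (\<Sum>u\<in>V. c u * f S u)\<^sup>2)"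
    by (intro sum.cong refl)
      (simp add: power2_eq_square sum_distrib_left sum_distrib_right mult_ac)
  finally show ?thesis .
qed

lemma psd_on_covariance:
  fixes F :: "'b set" and w :: "'b \<Rightarrow> real" and f :: "'b \<Rightarrow> 'a \<Rightarrow> real"
  assumes "finite F" "\<And>S. S \<in> F \<Longrightarrow> w S \<ge> 0" "sum w F \<le> 1"
  shows "psd_on V (\<lambda>u v. (\<Sum>S\<in>F. w S * f S u * f S v)
                          - (\<Sum>S\<in>F. w S * f S u) * (\<Sum>S\<in>F. w S * f S v))"
  unfolding psd_on_def
proof (intro conjI ballI allI)
  fix u v
  show "(\<Sum>S\<in>F. w S * f S u * f S v) - (\<Sum>S\<in>F. w S * f S u) * (\<Sum>S\<in>F. w S * f S v)
      = (\<Sum>S\<in>F. w S * f S v * f S u) - (\<Sum>S\<in>F. w S * f S v) * (\<Sum>S\<in>F. w S * f S u)"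
    by (simp add: mult_ac)
next
  fix c :: "'a \<Rightarrow> real"
  define g where "g S = (\<Sum>u\<in>V. c u * f S u)" for S
  have mean: "(\<Sum>u\<in>V. c u * (\<Sum>S\<in>F. w S * f S u)) = (\<Sum>S\<in>F. w S * g S)"
    by (simp add: g_def sum_distrib_left sum.swap[where B = F] mult_ac)
  have "(\<Sum>u\<in>V. \<Sum>v\<in>V. c u * ((\<Sum>S\<in>F. w S * f S u * f S v)
          - (\<Sum>S\<in>F. w S * f S u) * (\<Sum>S\<in>F. w S * f S v)) * c v)
      = (\<Sum>S\<in>F. w S * (g S)\<^sup>2) - (\<Sum>S\<in>F. w S * g S)\<^sup>2"
    unfolding right_diff_distrib left_diff_distrib sum_subtractf quadratic_form_outer_product
      quadratic_form_weighted_outer_products mean g_def ..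
  also have "\<dots> \<ge> 0"
    using weighted_sum_square_le[OF assms] by simp
  finally show "0 \<le> (\<Sum>u\<in>V. \<Sum>v\<in>V. c u * ((\<Sum>S\<in>F. w S * f S u * f S v)
          - (\<Sum>S\<in>F. w S * f S u) * (\<Sum>S\<in>F. w S * f S v)) * c v)" .
qed

lemma yvar_union:
  assumes "finite V"
  shows "yvar V z (T \<union> A) = (\<Sum>S | S \<subseteq> V \<and> S \<noteq> {} \<and> T \<subseteq> S. z S * of_bool (A \<subseteq> S))"
proof -
  have "finite {S. S \<subseteq> V \<and> S \<noteq> {} \<and> T \<subseteq> S}"
    using assms by simp
  moreover have "{S. S \<subseteq> V \<and> S \<noteq> {} \<and> T \<union> A \<subseteq> S}
      = {S \<in> {S. S \<subseteq> V \<and> S \<noteq> {} \<and> T \<subseteq> S}. A \<subseteq> S}"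
    by auto
  ultimately show ?thesis
    unfolding yvar_def by (simp only: sum.inter_filter) (intro sum.cong; simp)
qed

lemma yvar_le_1:
  assumes "cluster_lp_feasible V z x" "T \<subseteq> V" "T \<noteq> {}"
  shows "yvar V z T \<le> 1"
proof -
  obtain t where "t \<in> T"
    using assms(3) by blast
  have "finite {S. S \<subseteq> V \<and> S \<noteq> {} \<and> t \<in> S}"
    using assms(1) by (simp add: cluster_lp_feasible_def)
  then have "yvar V z T \<le> (\<Sum>S | S \<subseteq> V \<and> S \<noteq> {} \<and> t \<in> S. z S)"
    unfolding yvar_def using assms(1) \<open>t \<in> T\<close>
    by (intro sum_mono2) (auto simp: cluster_lp_feasible_def)
  also have "\<dots> = 1"
    using assms \<open>t \<in> T\<close> by (auto simp: cluster_lp_feasible_def)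
  finally show ?thesis .
qed

theorem lemma24:
  fixes V :: "'a set" and z x :: "'a set \<Rightarrow> real" and T :: "'a set"
  assumes "cluster_lp_feasible V z x"
    and "T \<subseteq> V" and "T \<noteq> {}"
  shows "psd_on V (\<lambda>u v. yvar V z (T \<union> {u, v}) - yvar V z (T \<union> {u}) * yvar V z (T \<union> {v}))"
proof -
  define F where "F = {S. S \<subseteq> V \<and> S \<noteq> {} \<and> T \<subseteq> S}"
  have "finite V" and "\<And>S. S \<in> F \<Longrightarrow> z S \<ge> 0"
    using assms(1) by (auto simp: cluster_lp_feasible_def F_def)
  moreover have "finite F"
    using \<open>finite V\<close> by (simp add: F_def)
  moreover have "sum z F \<le> 1"
    using yvar_le_1[OF assms] by (simp add: F_def yvar_def)
  ultimately have "psd_on V (\<lambda>u v. (\<Sum>S\<in>F. z S * of_bool (u \<in> S) * of_bool (v \<in> S))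
      - (\<Sum>S\<in>F. z S * of_bool (u \<in> S)) * (\<Sum>S\<in>F. z S * of_bool (v \<in> S)))"
    by (intro psd_on_covariance) auto
  moreover have "yvar V z (T \<union> {u, v}) = (\<Sum>S\<in>F. z S * of_bool (u \<in> S) * of_bool (v \<in> S))"
    and "yvar V z (T \<union> {u}) = (\<Sum>S\<in>F. z S * of_bool (u \<in> S))" for u v
    using yvar_union[OF \<open>finite V\<close>, of z T "{u, v}"] yvar_union[OF \<open>finite V\<close>, of z T "{u}"]
    by (simp_all add: F_def mult.assoc of_bool_conj)
  ultimately show ?thesis
    by simp
qed

end
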